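(* Let $D$ be a strong nonseparable digraph, let $H$ be a strong nonseparable subdigraph of $D$, and let $P=(x_0,x_1,\ldots,x_{r-1},x_r)$ be an ear of $H$ in $D$ with length $l(P)=r\geq 2$. If $H$ has a kernel $N$ and $H'=H\cup P$ has no kernel, then one of the following holds: (1) $x_0,x_r\in N$ and $l(P)$ is odd; (2) $x_0\in N$, $x_r\notin N$ and $l(P)$ is even.
   Context: All digraphs are finite, without loops or multiple arcs. Paths and cycles are directed; the length of a path is its number of arcs. A digraph is strong if for every ordered pair of vertices $x,y$ there is a directed path from $x$ to $y$; it is nonseparable if its underlying undirected graph is nonseparable (has no cut vertex). For a subdigraph $H$ of $D$, an ear of $H$ in $D$ is a directed path $(x_0,\ldots,x_r)$ in $D$ whose end vertices $x_0,x_r$ lie in $H$ and whose internal vertices $x_1,\ldots,x_{r-1}$ do not lie in $H$ (or a directed cycle with exactly one vertex $x_0=x_r$ in $H$). A kernel of a digraph is a set $N$ of vertices that is independent (no arc between two of its vertices) and absorbent (every vertex not in $N$ has an out-neighbour in $N$). *)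

theory Defs
  imports Main
begin

definition digraph :: "'a set \<Rightarrow> ('a \<times> 'a) set \<Rightarrow> bool" where
  "digraph V A \<longleftrightarrow> finite V \<and> A \<subseteq> V \<times> V \<and> (\<forall>x. (x, x) \<notin> A)"

definition subdigraph :: "'a set \<Rightarrow> ('a \<times> 'a) set \<Rightarrow> 'a set \<Rightarrow> ('a \<times> 'a) set \<Rightarrow> bool" where
  "subdigraph VH AH V A \<longleftrightarrow> VH \<subseteq> V \<and> AH \<subseteq> A \<and> AH \<subseteq> VH \<times> VH"

definition strong :: "'a set \<Rightarrow> ('a \<times> 'a) set \<Rightarrow> bool" where
  "strong V A \<longleftrightarrow> (\<forall>x\<in>V. \<forall>y\<in>V. (x, y) \<in> (A \<inter> V \<times> V)\<^sup>*)"

definition und_connected :: "'a set \<Rightarrow> ('a \<times> 'a) set \<Rightarrow> bool" where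
  "und_connected S A \<longleftrightarrow>
     (\<forall>x\<in>S. \<forall>y\<in>S. (x, y) \<in> {(u, v). u \<in> S \<and> v \<in> S \<and> ((u, v) \<in> A \<or> (v, u) \<in> A)}\<^sup>*)"

definition nonseparable :: "'a set \<Rightarrow> ('a \<times> 'a) set \<Rightarrow> bool" where
  "nonseparable V A \<longleftrightarrow> und_connected V A \<and> (\<forall>v\<in>V. und_connected (V - {v}) A)"

definition kernel :: "'a set \<Rightarrow> ('a \<times> 'a) set \<Rightarrow> 'a set \<Rightarrow> bool" where
  "kernel V A N \<longleftrightarrow> N \<subseteq> V \<and> (\<forall>x\<in>N. \<forall>y\<in>N. (x, y) \<notin> A)
                     \<and> (\<forall>x\<in>V - N. \<exists>y\<in>N. (x, y) \<in> A)"

definition has_kernel :: "'a set \<Rightarrow> ('a \<times> 'a) set \<Rightarrow> bool" where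
  "has_kernel V A \<longleftrightarrow> (\<exists>N. kernel V A N)"

definition path_arcs :: "'a list \<Rightarrow> ('a \<times> 'a) set" where
  "path_arcs xs = {(xs ! i, xs ! Suc i) | i. Suc i < length xs}"

text \<open>Ear of H=(VH,AH) in D=(V,A), given as vertex list [x_0,...,x_r]: a directed path
  (or a directed cycle when x_0 = x_r) in D whose end vertices lie in H and whose
  internal vertices are distinct and outside H. Its length is r = length xs - 1.\<close>
definition ear :: "'a set \<Rightarrow> ('a \<times> 'a) set \<Rightarrow> 'a set \<Rightarrow> 'a list \<Rightarrow> bool" where
  "ear V A VH xs \<longleftrightarrow> length xs \<ge> 2 \<and> path_arcs xs \<subseteq> A
     \<and> hd xs \<in> VH \<and> last xs \<in> VH
     \<and> distinct (butlast (tl xs)) \<and> set (butlast (tl xs)) \<inter> VH = {}"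

end

theory Submission
  imports Defs
begin

text \<open>If the conclusion fails, N extends to a kernel of H \<union> P by putting every second
  interior vertex of P into it, alternating backwards from x_r (so x_(r-1) is taken iff
  x_r \<notin> N). An arc of H joins two vertices of H, where the new set agrees with N; an arc
  x_i x_(i+1) of P with 0 < i has exactly one end in the new set; so independence can fail
  only at x_0 x_1, and it does precisely in the two cases of the theorem. Absorbency is
  inherited on H and holds on the interior of P by alternation.\<close>

definition alternating_interior :: "'a list \<Rightarrow> 'a set \<Rightarrow> 'a set" where
  "alternating_interior xs N =
     {xs ! i | i. 0 < i \<and> i < length xs - 1 \<and> (even (length xs - 1 - i) \<longleftrightarrow> last xs \<in> N)}"

lemma nth_interior_eq_nth_butlast_tl:
  assumes "0 < i" "i < length xs - 1"
  shows "xs ! i = butlast (tl xs) ! (i - 1)" "i - 1 < length (butlast (tl xs))"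
  using assms by (auto simp: nth_butlast nth_tl)

lemma ear_interior_notin:
  assumes "ear V A VH xs" "0 < i" "i < length xs - 1"
  shows "xs ! i \<notin> VH"
proof -
  have "xs ! i \<in> set (butlast (tl xs))"
    using nth_interior_eq_nth_butlast_tl[OF assms(2,3)] by simp
  then show ?thesis using assms(1) unfolding ear_def by blast
qed

lemma ear_interior_inj:
  assumes "ear V A VH xs" "0 < i" "i < length xs - 1" "0 < j" "j < length xs - 1"
    and "xs ! i = xs ! j"
  shows "i = j"
proof -
  have "distinct (butlast (tl xs))" using assms(1) unfolding ear_def by blast
  then have "i - 1 = j - 1"
    using assms(6) nth_interior_eq_nth_butlast_tl[OF assms(2,3)] nth_interior_eq_nth_butlast_tl[OF assms(4,5)]
    by (simp add: nth_eq_iff_index_eq)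
  then show ?thesis using assms(2,4) by simp
qed

lemma mem_alternating_interior_iff:
  assumes "ear V A VH xs" "N \<subseteq> VH" "0 < j" "j < length xs"
  shows "xs ! j \<in> N \<union> alternating_interior xs N \<longleftrightarrow> (even (length xs - 1 - j) \<longleftrightarrow> last xs \<in> N)"
proof (cases "j = length xs - 1")
  case True
  then have last: "xs ! j = last xs" using assms(4) by (cases xs rule: rev_cases) auto
  have "last xs \<notin> alternating_interior xs N"
  proof
    assume "last xs \<in> alternating_interior xs N"
    then obtain i where "0 < i" "i < length xs - 1" "last xs = xs ! i"
      unfolding alternating_interior_def by blast
    moreover have "last xs \<in> VH" using assms(1) unfolding ear_def by blast
    ultimately show False using ear_interior_notin[OF assms(1)] by metis
  qed
  then show ?thesis using True last by simp
next
  case False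
  then have interior: "0 < j" "j < length xs - 1" using assms(3,4) by auto
  have "xs ! j \<notin> N" using ear_interior_notin[OF assms(1) interior] assms(2) by blast
  moreover have "xs ! j \<in> alternating_interior xs N \<longleftrightarrow> (even (length xs - 1 - j) \<longleftrightarrow> last xs \<in> N)"
  proof
    assume "xs ! j \<in> alternating_interior xs N"
    then obtain i where i: "0 < i" "i < length xs - 1" "xs ! j = xs ! i"
        and parity: "even (length xs - 1 - i) \<longleftrightarrow> last xs \<in> N"
      unfolding alternating_interior_def by blast
    then have "i = j" using ear_interior_inj[OF assms(1) i(1,2) interior] by simp
    then show "even (length xs - 1 - j) \<longleftrightarrow> last xs \<in> N" using parity by simp
  next
    assume "even (length xs - 1 - j) \<longleftrightarrow> last xs \<in> N"
    then show "xs ! j \<in> alternating_interior xs N"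
      using interior unfolding alternating_interior_def by blast
  qed
  ultimately show ?thesis by blast
qed

lemma kernel_extends_along_ear:
  assumes "AH \<subseteq> VH \<times> VH" "ear V A VH xs" "kernel VH AH N"
    and "\<not> (hd xs \<in> N \<and> (odd (length xs - 1) \<longleftrightarrow> last xs \<in> N))"
  shows "kernel (VH \<union> set xs) (AH \<union> path_arcs xs) (N \<union> alternating_interior xs N)"
    (is "kernel _ _ ?N'")
proof -
  let ?r = "length xs - 1"
  have N: "N \<subseteq> VH" "\<forall>x\<in>N. \<forall>y\<in>N. (x, y) \<notin> AH" "\<forall>x\<in>VH - N. \<exists>y\<in>N. (x, y) \<in> AH"
    using assms(3) unfolding kernel_def by auto
  have len: "length xs \<ge> 2" and hd_VH: "hd xs \<in> VH" and last_VH: "last xs \<in> VH"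
    using assms(2) unfolding ear_def by auto
  then have hd: "hd xs = xs ! 0" and last: "last xs = xs ! ?r"
    by (simp_all add: hd_conv_nth last_conv_nth[of xs] flip: length_greater_0_conv)
  note mem = mem_alternating_interior_iff[OF assms(2) N(1)]
  have new_in_interior: "\<exists>i. 0 < i \<and> i < ?r \<and> x = xs ! i" if "x \<in> ?N' - N" for x
    using that unfolding alternating_interior_def by auto
  have old_in_N: "x \<in> N" if "x \<in> ?N'" "x \<in> VH" for x
    using that new_in_interior ear_interior_notin[OF assms(2)] by blast
  have independent: "(x, y) \<notin> AH \<union> path_arcs xs" if "x \<in> ?N'" "y \<in> ?N'" for x y
  proof
    assume "(x, y) \<in> AH \<union> path_arcs xs"
    then consider "(x, y) \<in> AH" | i where "Suc i < length xs" "x = xs ! i" "y = xs ! Suc i"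
      unfolding path_arcs_def by blast
    then show False
    proof cases
      case 1
      then have "x \<in> VH" "y \<in> VH" using assms(1) by auto
      then have "x \<in> N" "y \<in> N" using that old_in_N by blast+
      then show False using N(2) 1 by blast
    next
      case (2 i)
      have y_parity: "even (?r - Suc i) \<longleftrightarrow> last xs \<in> N" using mem[of "Suc i"] 2 that(2) by simp
      show False
      proof (cases "i = 0")
        case True
        then have "hd xs \<in> N" using old_in_N that(1) 2 hd hd_VH by simp
        moreover have "even (?r - Suc 0) \<longleftrightarrow> odd ?r" using len by presburger
        ultimately show False using assms(4) y_parity True by simp
      next
        case False
        then have "?r - i = Suc (?r - Suc i)" using 2 by simp
        then show False using mem[of i] 2 False that(1) y_parity by simp
      qed
    qed
  qed
  have absorbent: "\<exists>y\<in>?N'. (x, y) \<in> AH \<union> path_arcs xs" if x: "x \<in> VH \<union> set xs - ?N'" for x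
  proof (cases "x \<in> VH")
    case True
    then show ?thesis using x N(3) by blast
  next
    case False
    then obtain j where j: "j < length xs" "x = xs ! j" using x by (auto simp: in_set_conv_nth)
    have "j \<noteq> 0" "j \<noteq> ?r"
      using False j hd hd_VH last last_VH by metis+
    then have "0 < j" "j < ?r" "?r - j = Suc (?r - Suc j)" using j by auto
    then have "xs ! Suc j \<in> ?N'" using mem[of j] mem[of "Suc j"] j x by auto
    moreover have "(x, xs ! Suc j) \<in> path_arcs xs"
      unfolding path_arcs_def using j \<open>j < ?r\<close> by auto
    ultimately show ?thesis by blast
  qed
  have "?N' \<subseteq> VH \<union> set xs" using N(1) new_in_interior by fastforce
  then show ?thesis unfolding kernel_def using independent absorbent by blast
qed

theorem mainTheorem10:
  fixes V VH :: "'a set" and A AH :: "('a \<times> 'a) set" and xs :: "'a list" and N :: "'a set"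
  assumes "digraph V A" and "strong V A" and "nonseparable V A"
    and "subdigraph VH AH V A" and "strong VH AH" and "nonseparable VH AH"
    and "ear V A VH xs" and "length xs - 1 \<ge> 2"
    and "kernel VH AH N"
    and "\<not> has_kernel (VH \<union> set xs) (AH \<union> path_arcs xs)"
  shows "(hd xs \<in> N \<and> last xs \<in> N \<and> odd (length xs - 1))
       \<or> (hd xs \<in> N \<and> last xs \<notin> N \<and> even (length xs - 1))"
proof -
  have "AH \<subseteq> VH \<times> VH" using assms(4) unfolding subdigraph_def by blast
  then have "hd xs \<in> N \<and> (odd (length xs - 1) \<longleftrightarrow> last xs \<in> N)"
    using kernel_extends_along_ear[OF _ assms(7,9)] assms(10) unfolding has_kernel_def by blast
  then show ?thesis by blast
qed

end
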